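(* Let $\mathcal A,\mathcal B$ be unital $C^*$-algebras with faithful traces $\tau,\omega$, respectively, let $J:\mathcal A\to\mathcal B$ be a Jordan *-isomorphism and $X_0\in\mathcal B$ self-adjoint such that $\omega(\exp(J(T)+X_0))=\tau(\exp(T))$ for all self-adjoint $T\in\mathcal A$. Then $X_0$ is a central element of $\mathcal B$.
   Context: A trace is a positive linear functional with $\tau(AB)=\tau(BA)$; faithful means $\tau(A)=0$, $A\ge0$ implies $A=0$. A Jordan *-isomorphism is a linear bijection $J$ with $J(XY+YX)=J(X)J(Y)+J(Y)J(X)$ and $J(X^* )=J(X)^*$. *)

theory Defs
  imports "HOL-Analysis.Analysis"
begin

text \<open>A unital C*-algebra: a (real) unital Banach algebra carrying, in addition,
  a complex scalar multiplication cs extending the real one, and an involution adj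
  that is conjugate-linear, anti-multiplicative and satisfies the C*-identity.\<close>

definition cstar_algebra ::
  "(complex \<Rightarrow> 'a::{real_normed_algebra_1,banach} \<Rightarrow> 'a) \<Rightarrow> ('a \<Rightarrow> 'a) \<Rightarrow> bool" where
  "cstar_algebra cs adj \<longleftrightarrow>
     (\<forall>r x. cs (complex_of_real r) x = scaleR r x) \<and>
     (\<forall>a b x. cs (a * b) x = cs a (cs b x)) \<and>
     (\<forall>a b x. cs (a + b) x = cs a x + cs b x) \<and>
     (\<forall>a x y. cs a (x + y) = cs a x + cs a y) \<and>
     (\<forall>a x y. cs a (x * y) = cs a x * y \<and> cs a (x * y) = x * cs a y) \<and>
     (\<forall>a x. norm (cs a x) = cmod a * norm x) \<and>
     (\<forall>x. adj (adj x) = x) \<and>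
     (\<forall>x y. adj (x + y) = adj x + adj y) \<and>
     (\<forall>a x. adj (cs a x) = cs (cnj a) (adj x)) \<and>
     (\<forall>x y. adj (x * y) = adj y * adj x) \<and>
     (\<forall>x. norm (adj x * x) = (norm x)\<^sup>2)"

definition positive_el :: "('a::{real_normed_algebra_1,banach} \<Rightarrow> 'a) \<Rightarrow> 'a \<Rightarrow> bool" where
  "positive_el adj A \<longleftrightarrow> (\<exists>B. A = adj B * B)"

definition faithful_trace ::
  "(complex \<Rightarrow> 'a::{real_normed_algebra_1,banach} \<Rightarrow> 'a) \<Rightarrow> ('a \<Rightarrow> 'a) \<Rightarrow> ('a \<Rightarrow> complex) \<Rightarrow> bool" where
  "faithful_trace cs adj tau \<longleftrightarrow>
     (\<forall>x y. tau (x + y) = tau x + tau y) \<and>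
     (\<forall>a x. tau (cs a x) = a * tau x) \<and>
     (\<forall>A. positive_el adj A \<longrightarrow> Im (tau A) = 0 \<and> Re (tau A) \<ge> 0) \<and>
     (\<forall>A B. tau (A * B) = tau (B * A)) \<and>
     (\<forall>A. positive_el adj A \<and> tau A = 0 \<longrightarrow> A = 0)"

definition jordan_star_iso ::
  "(complex \<Rightarrow> 'a::{real_normed_algebra_1,banach} \<Rightarrow> 'a) \<Rightarrow> ('a \<Rightarrow> 'a) \<Rightarrow>
   (complex \<Rightarrow> 'b::{real_normed_algebra_1,banach} \<Rightarrow> 'b) \<Rightarrow> ('b \<Rightarrow> 'b) \<Rightarrow> ('a \<Rightarrow> 'b) \<Rightarrow> bool" where
  "jordan_star_iso csA adjA csB adjB J \<longleftrightarrow>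
     bij J \<and>
     (\<forall>x y. J (x + y) = J x + J y) \<and>
     (\<forall>a x. J (csA a x) = csB a (J x)) \<and>
     (\<forall>X Y. J (X * Y + Y * X) = J X * J Y + J Y * J X) \<and>
     (\<forall>X. J (adjA X) = adjB (J X))"

end

(*
  Traces turn out to be bounded (positivity of 1 - z for small self-adjoint z comes from a
  binomial-series square root), so they can be exchanged with exponential series.
  Differentiating omega(exp(J(T + tS) + X0)) = tau(exp(T + tS)) at t = 0, where under a trace
  the derivative of exp at A in direction B is exp A * B, gives
  omega(exp(J T + X0) * J S) = tau(exp T * S); for T = 0 this is tau S = omega(exp X0 * J S).
  As J preserves Jordan products, 2 tau(T^n S) = tau(T^n S + S T^n) equals
  omega((exp X0 * H^n + H^n * exp X0) * Y) for H = J T, Y = J S; summing the exponential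
  series and using faithfulness of omega yields
    2 exp(H + X0) = exp X0 * exp H + exp H * exp X0   for all self-adjoint H.
  Comparing this identity for K, 2K and X0 + 2K shows that the trace of
  [exp K, exp X0] [exp X0, exp K] = [exp X0, exp K]* [exp X0, exp K] vanishes, so exp X0
  commutes with every exp (t K) and hence with every self-adjoint K. Then the identity reads
  exp(H + X0) = exp X0 * exp H, which forces X0 to commute with exp H, hence with H; since
  self-adjoint elements span B, X0 is central.
*)

theory Submission
  imports Defs "HOL-Computational_Algebra.Formal_Power_Series"
begin

section \<open>Square roots by the binomial series\<close>

lemma abs_gbinomial_half_le_1: "\<bar>(1/2::real) gchoose k\<bar> \<le> 1"
proof -
  have "fact k * \<bar>(1/2::real) gchoose k\<bar> = \<bar>fact k * ((1/2::real) gchoose k)\<bar>"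
    by (simp add: abs_mult)
  also have "\<dots> = (\<Prod>i = 0..<k. \<bar>1/2 - real i\<bar>)"
    by (simp only: gbinomial_mult_fact abs_prod)
  also have "\<dots> \<le> (\<Prod>i = 0..<k. real (Suc i))"
    by (intro prod_mono) auto
  also have "\<dots> = fact k"
    by (simp add: fact_prod_Suc)
  finally show ?thesis by simp
qed

lemma binomial_sqrt_series:
  fixes z :: "'a::{real_normed_algebra_1,banach}"
  assumes "norm z < 1"
  shows "summable (\<lambda>n. ((1/2::real) gchoose n) *\<^sub>R (- z) ^ n)"
    and "(\<Sum>n. ((1/2::real) gchoose n) *\<^sub>R (- z) ^ n) * (\<Sum>n. ((1/2::real) gchoose n) *\<^sub>R (- z) ^ n) = 1 - z"
proof -
  define a where "a = (\<lambda>n. ((1/2::real) gchoose n) *\<^sub>R (- z) ^ n)"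
  have "norm (a n) \<le> norm z ^ n" for n
    using mult_mono[OF abs_gbinomial_half_le_1 norm_power_ineq[of "- z" n]] by (simp add: a_def)
  then have norm_summable: "summable (\<lambda>n. norm (a n))"
    by (intro summable_comparison_test'[OF summable_geometric[of "norm z"]]) (use assms in auto)
  then show "summable (\<lambda>n. ((1/2::real) gchoose n) *\<^sub>R (- z) ^ n)"
    using summable_norm_cancel[OF norm_summable] by (simp only: a_def)
  have "(\<Sum>i\<le>k. a i * a (k - i)) = of_nat (1 choose k) *\<^sub>R (- z) ^ k" for k
  proof -
    have "a i * a (k - i) = (((1/2::real) gchoose i) * ((1/2) gchoose (k - i))) *\<^sub>R (- z) ^ k"
      if "i \<le> k" for i
    proof -
      have "(- z) ^ i * (- z) ^ (k - i) = (- z) ^ k"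
        using that by (simp flip: power_add)
      then show ?thesis by (simp add: a_def)
    qed
    then have "(\<Sum>i\<le>k. a i * a (k - i))
        = (\<Sum>i\<le>k. ((1/2::real) gchoose i) * ((1/2) gchoose (k - i))) *\<^sub>R (- z) ^ k"
      by (simp add: scaleR_sum_left)
    also have "(\<Sum>i\<le>k. ((1/2::real) gchoose i) * ((1/2) gchoose (k - i))) = of_nat (1 choose k)"
      using gbinomial_Vandermonde[of "1/2::real" "1/2" k] binomial_gbinomial[of 1 k, where 'a=real]
      by (simp add: atLeast0AtMost)
    finally show ?thesis .
  qed
  then have "suminf a * suminf a = (\<Sum>k. of_nat (1 choose k) *\<^sub>R (- z) ^ k)"
    using Cauchy_product[OF norm_summable norm_summable] by simp
  also have "\<dots> = (\<Sum>k\<in>{0,1}. of_nat (1 choose k) *\<^sub>R (- z) ^ k)"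
    by (rule suminf_finite) auto
  finally show "(\<Sum>n. ((1/2::real) gchoose n) *\<^sub>R (- z) ^ n) * (\<Sum>n. ((1/2::real) gchoose n) *\<^sub>R (- z) ^ n) = 1 - z"
    by (simp add: a_def)
qed

section \<open>Directional derivative of the exponential\<close>

definition pow_deriv :: "'a::real_normed_algebra_1 \<Rightarrow> 'a \<Rightarrow> nat \<Rightarrow> 'a" where
  "pow_deriv A B n = (\<Sum>k<n. A ^ k * B * A ^ (n - 1 - k))"

lemma pow_deriv_0 [simp]: "pow_deriv A B 0 = 0"
  by (simp add: pow_deriv_def)

lemma pow_deriv_Suc: "pow_deriv A B (Suc n) = A * pow_deriv A B n + B * A ^ n"
proof -
  have "pow_deriv A B (Suc n) = B * A ^ n + (\<Sum>k<n. A ^ Suc k * B * A ^ (n - 1 - k))"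
    unfolding pow_deriv_def by (subst sum.lessThan_Suc_shift) simp
  also have "(\<Sum>k<n. A ^ Suc k * B * A ^ (n - 1 - k)) = A * pow_deriv A B n"
    unfolding pow_deriv_def sum_distrib_left by (simp add: mult.assoc)
  finally show ?thesis
    by simp
qed

lemma pow_deriv_scaleR: "pow_deriv A (t *\<^sub>R B) n = t *\<^sub>R pow_deriv A B n"
  by (simp add: pow_deriv_def scaleR_sum_right)

context
  fixes A E :: "'a::real_normed_algebra_1" and R :: real
  assumes norm_le: "norm A \<le> R" "norm (A + E) \<le> R" and one_le: "1 \<le> R"
begin

lemma norm_power_perturbed_le: "norm ((A + E) ^ n) \<le> R ^ n"
  using norm_le(2) by (intro order_trans[OF norm_power_ineq] power_mono) auto

lemma power_le_power_Suc: "R ^ n \<le> R ^ Suc n"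
  using one_le by (intro power_increasing) auto

lemma norm_power_perturbation_le: "norm ((A + E) ^ n - A ^ n) \<le> real n * norm E * R ^ n"
proof (induction n)
  case (Suc n)
  have "(A + E) ^ Suc n - A ^ Suc n = A * ((A + E) ^ n - A ^ n) + E * (A + E) ^ n"
    by (simp add: algebra_simps)
  then have "norm ((A + E) ^ Suc n - A ^ Suc n)
      \<le> norm A * norm ((A + E) ^ n - A ^ n) + norm E * norm ((A + E) ^ n)"
    by (metis add_mono norm_mult_ineq norm_triangle_le)
  also have "\<dots> \<le> R * (real n * norm E * R ^ n) + norm E * R ^ Suc n"
    using Suc.IH norm_le(1) one_le order_trans[OF norm_power_perturbed_le power_le_power_Suc]
    by (intro add_mono mult_mono mult_left_mono) auto
  also have "\<dots> = real (Suc n) * norm E * R ^ Suc n"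
    by (simp add: algebra_simps)
  finally show ?case .
qed simp

lemma norm_power_perturbation_second_order_le:
  "norm ((A + E) ^ n - A ^ n - pow_deriv A E n) \<le> real (n * n) * (norm E)\<^sup>2 * R ^ n"
proof (induction n)
  case (Suc n)
  have "(A + E) ^ Suc n - A ^ Suc n - pow_deriv A E (Suc n)
      = A * ((A + E) ^ n - A ^ n - pow_deriv A E n) + E * ((A + E) ^ n - A ^ n)"
    by (simp add: pow_deriv_Suc algebra_simps)
  then have "norm ((A + E) ^ Suc n - A ^ Suc n - pow_deriv A E (Suc n))
      \<le> norm A * norm ((A + E) ^ n - A ^ n - pow_deriv A E n) + norm E * norm ((A + E) ^ n - A ^ n)"
    by (metis add_mono norm_mult_ineq norm_triangle_le)
  also have "\<dots> \<le> R * (real (n * n) * (norm E)\<^sup>2 * R ^ n) + norm E * (real n * norm E * R ^ Suc n)"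
    using Suc.IH norm_le(1) one_le
      order_trans[OF norm_power_perturbation_le mult_left_mono[OF power_le_power_Suc]]
    by (intro add_mono mult_mono mult_left_mono) auto
  also have "\<dots> = real (n * n + n) * (norm E)\<^sup>2 * R ^ Suc n"
    by (simp add: algebra_simps power2_eq_square)
  also have "\<dots> \<le> real (Suc n * Suc n) * (norm E)\<^sup>2 * R ^ Suc n"
    using one_le by (intro mult_right_mono) auto
  finally show ?case .
qed simp

end

lemma of_nat_mult_self_le_four_power: "real (n * n) \<le> 4 ^ n"
proof -
  have "n * n \<le> 2 ^ n * 2 ^ n"
    using less_exp[of n] by (intro mult_mono) auto
  also have "(2::nat) ^ n * 2 ^ n = 4 ^ n"
    by (simp flip: power_mult_distrib)
  finally show ?thesis
    by (metis of_nat_le_iff of_nat_numeral of_nat_power)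
qed

lemma exp_majorant:
  fixes f :: "nat \<Rightarrow> 'a::banach"
  assumes "\<And>n. norm (f n) \<le> c * (real (n * n) * R ^ n)" and "0 \<le> c" and "0 \<le> R"
  shows "summable (\<lambda>n. f n /\<^sub>R fact n)" and "norm (\<Sum>n. f n /\<^sub>R fact n) \<le> c * exp (4 * R)"
proof -
  have majorant: "(\<lambda>n. c * ((4 * R) ^ n /\<^sub>R fact n)) sums (c * exp (4 * R))"
    by (rule sums_mult[OF exp_converges])
  have "norm (f n /\<^sub>R fact n) \<le> c * ((4 * R) ^ n /\<^sub>R fact n)" for n
  proof -
    have "c * (real (n * n) * R ^ n) \<le> c * (4 ^ n * R ^ n)"
      using of_nat_mult_self_le_four_power[of n] assms(2,3)
      by (intro mult_left_mono mult_right_mono) auto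
    then have "norm (f n) \<le> c * ((4 * R) ^ n)"
      using order_trans[OF assms(1)] by (simp add: power_mult_distrib)
    then show ?thesis
      by (simp add: divide_right_mono field_simps)
  qed
  then show "summable (\<lambda>n. f n /\<^sub>R fact n)"
    by (intro summable_comparison_test'[OF sums_summable[OF majorant]])
  then show "norm (\<Sum>n. f n /\<^sub>R fact n) \<le> c * exp (4 * R)"
    using norm_sums_le[OF summable_sums majorant] \<open>\<And>n. norm (f n /\<^sub>R fact n) \<le> _\<close> by blast
qed

lemma summable_pow_deriv:
  fixes A B :: "'a::{real_normed_algebra_1,banach}"
  shows "summable (\<lambda>n. pow_deriv A B n /\<^sub>R fact n)"
proof -
  define R where "R = norm A + norm B + 1"
  have "norm A \<le> R" "norm (A + B) \<le> R" "1 \<le> R"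
    using norm_triangle_ineq[of A B] by (auto simp: R_def)
  then have "summable (\<lambda>n. ((A + B) ^ n - A ^ n - pow_deriv A B n) /\<^sub>R fact n)"
    using norm_power_perturbation_second_order_le
    by (intro exp_majorant(1)[where c = "(norm B)\<^sup>2" and R = R]) (auto simp: mult_ac)
  then have "summable (\<lambda>n. (A + B) ^ n /\<^sub>R fact n - A ^ n /\<^sub>R fact n
      - ((A + B) ^ n - A ^ n - pow_deriv A B n) /\<^sub>R fact n)"
    by (intro summable_diff summable_exp_generic)
  then show ?thesis
    by (simp add: scaleR_diff_right)
qed

definition exp_deriv :: "'a::{real_normed_algebra_1,banach} \<Rightarrow> 'a \<Rightarrow> 'a" where
  "exp_deriv A B = (\<Sum>n. pow_deriv A B n /\<^sub>R fact n)"

lemma exp_deriv_scaleR: "exp_deriv A (t *\<^sub>R B) = t *\<^sub>R exp_deriv A B"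
  unfolding exp_deriv_def suminf_scaleR_right[OF summable_pow_deriv]
  by (simp add: pow_deriv_scaleR mult.commute)

lemma norm_exp_perturbation_le:
  fixes A E :: "'a::{real_normed_algebra_1,banach}"
  assumes "norm A \<le> R" "norm (A + E) \<le> R" "1 \<le> R"
  shows "norm (exp (A + E) - exp A - exp_deriv A E) \<le> (norm E)\<^sup>2 * exp (4 * R)"
proof -
  define D where "D n = (A + E) ^ n - A ^ n - pow_deriv A E n" for n
  have "(\<lambda>n. D n /\<^sub>R fact n) sums (exp (A + E) - exp A - exp_deriv A E)"
    using sums_diff[OF sums_diff[OF exp_converges exp_converges] summable_sums[OF summable_pow_deriv]]
    by (simp add: D_def exp_deriv_def scaleR_diff_right)
  moreover have "norm (\<Sum>n. D n /\<^sub>R fact n) \<le> (norm E)\<^sup>2 * exp (4 * R)"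
    using norm_power_perturbation_second_order_le[OF assms] assms(3)
    by (intro exp_majorant(2)) (auto simp: D_def mult_ac)
  ultimately show ?thesis
    by (simp add: sums_iff)
qed

lemma has_vector_derivative_at_0_if_quadratic_bound:
  fixes g :: "real \<Rightarrow> 'b::real_normed_vector"
  assumes "\<And>t. \<bar>t\<bar> \<le> 1 \<Longrightarrow> norm (g t - g 0 - t *\<^sub>R L) \<le> K * t\<^sup>2"
  shows "(g has_vector_derivative L) (at 0)"
proof -
  have "\<exists>d>0. \<forall>t. \<bar>t\<bar> < d \<longrightarrow> norm (g t - g 0 - t *\<^sub>R L) \<le> e * \<bar>t\<bar>" if "e > 0" for e
  proof (intro exI conjI allI impI)
    show "min 1 (e / (\<bar>K\<bar> + 1)) > 0"
      using that by simp
    fix t :: real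
    assume t: "\<bar>t\<bar> < min 1 (e / (\<bar>K\<bar> + 1))"
    then have "(\<bar>K\<bar> + 1) * \<bar>t\<bar> \<le> e"
      by (simp add: field_simps)
    then have "(\<bar>K\<bar> + 1) * \<bar>t\<bar> * \<bar>t\<bar> \<le> e * \<bar>t\<bar>"
      by (simp add: mult_right_mono)
    moreover have "K * t\<^sup>2 \<le> (\<bar>K\<bar> + 1) * t\<^sup>2"
      by (intro mult_right_mono) auto
    then have "K * t\<^sup>2 \<le> (\<bar>K\<bar> + 1) * \<bar>t\<bar> * \<bar>t\<bar>"
      by (simp add: mult.assoc power2_eq_square abs_mult_self_eq)
    ultimately show "norm (g t - g 0 - t *\<^sub>R L) \<le> e * \<bar>t\<bar>"
      using assms[of t] t by linarith
  qed
  then show ?thesis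
    unfolding has_vector_derivative_def has_derivative_at_alt
    by (auto intro: bounded_linear_scaleR_left)
qed

lemma exp_has_vector_derivative_direction:
  fixes A B :: "'a::{real_normed_algebra_1,banach}"
  shows "((\<lambda>t. exp (A + t *\<^sub>R B)) has_vector_derivative exp_deriv A B) (at 0)"
proof -
  define R where "R = norm A + norm B + 1"
  show ?thesis
  proof (rule has_vector_derivative_at_0_if_quadratic_bound)
    fix t :: real
    assume "\<bar>t\<bar> \<le> 1"
    then have "norm (t *\<^sub>R B) \<le> norm B"
      by (simp add: mult_left_le_one_le)
    then have "norm (A + t *\<^sub>R B) \<le> R"
      unfolding R_def using norm_triangle_ineq[of A "t *\<^sub>R B"] by linarith
    then have "norm (exp (A + t *\<^sub>R B) - exp A - exp_deriv A (t *\<^sub>R B)) \<le> (norm (t *\<^sub>R B))\<^sup>2 * exp (4 * R)"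
      by (intro norm_exp_perturbation_le) (auto simp: R_def)
    then show "norm (exp (A + t *\<^sub>R B) - exp (A + 0 *\<^sub>R B) - t *\<^sub>R exp_deriv A B)
        \<le> ((norm B)\<^sup>2 * exp (4 * R)) * t\<^sup>2"
      by (simp add: exp_deriv_scaleR power_mult_distrib mult_ac)
  qed
qed

section \<open>Tracial functionals and commutation\<close>

lemma trace_pow_deriv_Suc:
  fixes f :: "'a::real_normed_algebra_1 \<Rightarrow> 'c::real_normed_vector"
  assumes "bounded_linear f" and "\<And>x y. f (x * y) = f (y * x)"
  shows "f (pow_deriv A B (Suc n)) = real (Suc n) *\<^sub>R f (A ^ n * B)"
proof -
  interpret f: bounded_linear f by (rule assms(1))
  have "f (A ^ k * B * A ^ (n - k)) = f (A ^ n * B)" if "k \<le> n" for k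
  proof -
    have "f (A ^ k * B * A ^ (n - k)) = f (A ^ (n - k) * A ^ k * B)"
      using assms(2)[of "A ^ k * B" "A ^ (n - k)"] by (simp only: mult.assoc)
    also have "\<dots> = f (A ^ n * B)"
      using that by (simp flip: power_add)
    finally show ?thesis .
  qed
  then have "(\<Sum>k<Suc n. f (A ^ k * B * A ^ (n - k))) = (\<Sum>k<Suc n. f (A ^ n * B))"
    by (intro sum.cong) auto
  then show ?thesis
    by (simp add: pow_deriv_def f.sum sum_constant_scaleR del: sum.lessThan_Suc)
qed

lemma trace_exp_deriv:
  fixes f :: "'a::{real_normed_algebra_1,banach} \<Rightarrow> 'c::real_normed_vector"
  assumes "bounded_linear f" and "\<And>x y. f (x * y) = f (y * x)"
  shows "f (exp_deriv A B) = f (exp A * B)"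
proof -
  interpret f: bounded_linear f by (rule assms(1))
  have "(\<lambda>n. f (pow_deriv A B n /\<^sub>R fact n)) sums f (exp_deriv A B)"
    unfolding exp_deriv_def by (rule f.sums[OF summable_sums[OF summable_pow_deriv]])
  then have "(\<lambda>m. f (pow_deriv A B (Suc m) /\<^sub>R fact (Suc m))) sums f (exp_deriv A B)"
    by (subst sums_Suc_iff) simp
  moreover have "f (pow_deriv A B (Suc m) /\<^sub>R fact (Suc m)) = f ((A ^ m /\<^sub>R fact m) * B)" for m
  proof -
    have "inverse (fact (Suc m)) * real (Suc m) = inverse (fact m)"
      by (simp add: fact_Suc)
    then show ?thesis
      by (simp add: f.scaleR trace_pow_deriv_Suc[OF assms])
  qed
  ultimately have "(\<lambda>m. f ((A ^ m /\<^sub>R fact m) * B)) sums f (exp_deriv A B)"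
    by simp
  moreover have "(\<lambda>m. f ((A ^ m /\<^sub>R fact m) * B)) sums f (exp A * B)"
    by (rule f.sums[OF sums_mult2[OF exp_converges]])
  ultimately show ?thesis
    by (rule sums_unique2)
qed

lemma trace_exp_has_vector_derivative:
  fixes f :: "'a::{real_normed_algebra_1,banach} \<Rightarrow> 'c::real_normed_vector"
  assumes "bounded_linear f" and "\<And>x y. f (x * y) = f (y * x)"
  shows "((\<lambda>t. f (exp (A + t *\<^sub>R B))) has_vector_derivative f (exp A * B)) (at 0)"
  using bounded_linear.has_vector_derivative[OF assms(1) exp_has_vector_derivative_direction]
  by (simp add: trace_exp_deriv[OF assms])

lemma exp_eq_if_powers_eq:
  fixes A :: "'a::{real_normed_algebra_1,banach}" and B :: "'b::{real_normed_algebra_1,banach}"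
  assumes "bounded_linear f" "bounded_linear g" and "\<And>n. f (A ^ n) = g (B ^ n)"
  shows "f (exp A) = g (exp B)"
proof -
  interpret f: bounded_linear f by (rule assms(1))
  interpret g: bounded_linear g by (rule assms(2))
  have "(\<lambda>n. f (A ^ n /\<^sub>R fact n)) sums f (exp A)"
    by (rule f.sums[OF exp_converges])
  moreover have "(\<lambda>n. f (A ^ n /\<^sub>R fact n)) sums g (exp B)"
    using g.sums[OF exp_converges] by (simp add: f.scaleR g.scaleR assms(3))
  ultimately show ?thesis
    by (rule sums_unique2)
qed

lemma commute_if_commute_exp:
  fixes X K :: "'a::{real_normed_algebra_1,banach}"
  assumes "\<And>t. X * exp (t *\<^sub>R K) = exp (t *\<^sub>R K) * X"
  shows "X * K = K * X"
proof -
  have "((\<lambda>t. exp (t *\<^sub>R K)) has_vector_derivative K) (at 0)"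
    using exp_scaleR_has_vector_derivative_right[where A=K and t=0 and T=UNIV] by simp
  then have "((\<lambda>t. X * exp (t *\<^sub>R K) - exp (t *\<^sub>R K) * X) has_vector_derivative (X * K - K * X)) (at 0)"
    by (intro has_vector_derivative_diff has_vector_derivative_mult_right has_vector_derivative_mult_left)
  then have "((\<lambda>t. 0) has_vector_derivative (X * K - K * X)) (at 0)"
    using assms by simp
  then show ?thesis
    using vector_derivative_unique_at has_vector_derivative_const by fastforce
qed

lemma commute_exp_if_exp_add_eq:
  fixes X H :: "'a::{real_normed_algebra_1,banach}"
  assumes exp_add: "exp (H + X) = exp X * exp H" and comm: "exp X * H = H * exp X"
  shows "X * exp H = exp H * X"
proof -
  have "exp X * exp H * (H + X) = (H + X) * (exp X * exp H)"
    using exp_times_arg_commute[of "H + X"] unfolding exp_add .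
  moreover have "exp X * exp H * (H + X) = exp X * (H * exp H) + exp X * (exp H * X)"
    by (simp add: distrib_left mult.assoc exp_times_arg_commute)
  moreover have "H * exp X = exp X * H" "X * exp X = exp X * X"
    using comm exp_times_arg_commute[of X] by simp_all
  then have "(H + X) * (exp X * exp H) = exp X * (H * exp H) + exp X * (X * exp H)"
    by (simp add: distrib_right flip: mult.assoc)
  ultimately have "exp X * (exp H * X) = exp X * (X * exp H)"
    by simp
  then have "exp (- X) * exp X * (exp H * X) = exp (- X) * exp X * (X * exp H)"
    by (simp add: mult.assoc)
  then show ?thesis
    using exp_minus_inverse[of "- X"] by simp
qed

text \<open>By cyclicity, \<open>w ([G, E] * [E, G]) = w (E * Q + Q * E - P * P)\<close> for
  \<open>P = E * G + G * E\<close> and \<open>Q = E * G * G + G * G * E\<close>.\<close>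

lemma trace_commutator_mult_eq_0:
  fixes E G :: "'a::real_normed_algebra_1" and w :: "'a \<Rightarrow> 'c::real_vector"
  assumes "linear w" and tracial: "\<And>x y. w (x * y) = w (y * x)"
    and "E * (E * G * G + G * G * E) + (E * G * G + G * G * E) * E = (E * G + G * E) * (E * G + G * E)"
  shows "w ((G * E - E * G) * (E * G - G * E)) = 0"
proof -
  have "(G * E - E * G) * (E * G - G * E)
      = (G * E * E * G - E * E * G * G) + (G * E * E * G - G * G * E * E)
        + ((E * (E * G * G + G * G * E) + (E * G * G + G * G * E) * E) - (E * G + G * E) * (E * G + G * E))"
    by (simp add: algebra_simps)
  moreover have "w (G * E * E * G) = w (E * E * G * G)" "w (G * E * E * G) = w (G * G * E * E)"
    using tracial[of G "E * E * G"] tracial[of "G * E * E" G] by (simp_all add: mult.assoc)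
  ultimately show ?thesis
    using assms(3) by (simp add: linear_add[OF assms(1)] linear_diff[OF assms(1)] linear_0[OF assms(1)])
qed

section \<open>C*-algebras with a faithful trace\<close>

locale cstar =
  fixes cs :: "complex \<Rightarrow> 'a::{real_normed_algebra_1,banach} \<Rightarrow> 'a" and adj :: "'a \<Rightarrow> 'a"
  assumes cstar_algebra: "cstar_algebra cs adj"
begin

lemma cs_of_real: "cs (complex_of_real r) x = r *\<^sub>R x"
  using cstar_algebra unfolding cstar_algebra_def by metis

lemma cs_mult: "cs (a * b) x = cs a (cs b x)"
  using cstar_algebra unfolding cstar_algebra_def by metis

lemma cs_mult_left: "cs a (x * y) = cs a x * y"
  using cstar_algebra unfolding cstar_algebra_def by metis

lemma cs_mult_right: "cs a (x * y) = x * cs a y"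
  using cstar_algebra unfolding cstar_algebra_def by metis

lemma norm_cs: "norm (cs a x) = cmod a * norm x"
  using cstar_algebra unfolding cstar_algebra_def by metis

lemma adj_adj [simp]: "adj (adj x) = x"
  using cstar_algebra unfolding cstar_algebra_def by metis

lemma adj_add: "adj (x + y) = adj x + adj y"
  using cstar_algebra unfolding cstar_algebra_def by metis

lemma adj_cs: "adj (cs a x) = cs (cnj a) (adj x)"
  using cstar_algebra unfolding cstar_algebra_def by metis

lemma adj_mult: "adj (x * y) = adj y * adj x"
  using cstar_algebra unfolding cstar_algebra_def by metis

lemma norm_adj_mult_self: "norm (adj x * x) = (norm x)\<^sup>2"
  using cstar_algebra unfolding cstar_algebra_def by metis

lemma cs_minus_one: "cs (-1) x = - x"
  using cs_of_real[of "-1" x] by simp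

lemma adj_scaleR: "adj (r *\<^sub>R x) = r *\<^sub>R adj x"
  using adj_cs[of "complex_of_real r" x] by (simp add: cs_of_real)

lemma norm_adj [simp]: "norm (adj x) = norm x"
proof -
  have "norm y \<le> norm (adj y)" for y
  proof (cases "y = 0")
    case False
    have "(norm y)\<^sup>2 \<le> norm (adj y) * norm y"
      using norm_adj_mult_self[of y] norm_mult_ineq[of "adj y" y] by simp
    then show ?thesis
      using False by (simp add: power2_eq_square)
  qed simp
  from this[of x] this[of "adj x"] show ?thesis by simp
qed

lemma bounded_linear_adj: "bounded_linear adj"
  by (rule bounded_linear_intro[where K=1]) (auto simp: adj_add adj_scaleR)

sublocale adj: bounded_linear adj
  by (rule bounded_linear_adj)

lemma adj_one [simp]: "adj 1 = 1"
  using adj_mult[of "adj 1" 1] by simp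

lemma adj_power: "adj (x ^ n) = adj x ^ n"
  by (induction n) (auto simp: adj_mult power_commutes)

lemma adj_exp: "adj (exp x) = exp (adj x)"
proof -
  have "(\<lambda>n. adj (x ^ n /\<^sub>R fact n)) sums adj (exp x)"
    by (rule adj.sums[OF exp_converges])
  then show ?thesis
    by (simp add: adj_scaleR adj_power sums_iff exp_def)
qed

lemma eq_0_if_adj_mult_self_eq_0: "adj x * x = 0 \<Longrightarrow> x = 0"
  using norm_adj_mult_self[of x] by simp

text \<open>Positivity in \<^const>\<open>faithful_trace\<close> refers only to elements of the form \<open>adj B * B\<close>,
  so \<open>1 - z\<close> needs an explicit self-adjoint square root.\<close>

lemma positive_one_minus:
  assumes "adj z = z" and "norm z < 1"
  shows "positive_el adj (1 - z)"
proof -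
  define b where "b = (\<Sum>n. ((1/2::real) gchoose n) *\<^sub>R (- z) ^ n)"
  have "adj b = b"
    unfolding b_def adj.suminf[OF binomial_sqrt_series(1)[OF assms(2)]]
    by (simp add: adj_scaleR adj_power adj.neg assms(1))
  then show ?thesis
    using binomial_sqrt_series(2)[OF assms(2)] unfolding positive_el_def b_def by metis
qed

lemma sa_decomposition:
  obtains h k where "adj h = h" "adj k = k" "x = h + cs \<i> k" "norm h \<le> norm x" "norm k \<le> norm x"
proof
  define h where "h = (1/2) *\<^sub>R (x + adj x)"
  define k where "k = cs (- \<i> / 2) (x - adj x)"
  show "adj h = h"
    by (simp add: h_def adj_scaleR adj_add add.commute)
  have "adj k = cs (\<i> / 2) (- (x - adj x))"
    by (simp add: k_def adj_cs adj.diff)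
  also have "\<dots> = k"
    unfolding k_def by (metis cs_minus_one cs_mult minus_divide_left mult_minus1_right)
  finally show "adj k = k" .
  have "cs \<i> k = cs (complex_of_real (1/2)) (x - adj x)"
    by (simp add: k_def flip: cs_mult)
  then have "cs \<i> k = (1/2) *\<^sub>R (x - adj x)"
    using cs_of_real[of "1/2" "x - adj x"] by simp
  then have "h + cs \<i> k = (1/2) *\<^sub>R ((x + adj x) + (x - adj x))"
    by (simp only: h_def scaleR_add_right)
  also have "(x + adj x) + (x - adj x) = 2 *\<^sub>R x"
    by (simp add: scaleR_2)
  finally show "x = h + cs \<i> k"
    by simp
  show "norm h \<le> norm x"
    using norm_triangle_ineq[of x "adj x"] by (simp add: h_def)
  show "norm k \<le> norm x"
    using norm_triangle_ineq4[of x "adj x"] by (simp add: k_def norm_cs)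
qed

lemma commute_if_commute_sa:
  assumes "\<And>H. adj H = H \<Longrightarrow> X * H = H * X"
  shows "X * Y = Y * X"
proof -
  obtain h k where hk: "adj h = h" "adj k = k" "Y = h + cs \<i> k"
    using sa_decomposition by metis
  have "X * cs \<i> k = cs \<i> k * X"
    by (metis assms hk(2) cs_mult_left cs_mult_right)
  then show ?thesis
    using assms[OF hk(1)] hk(3) by (simp add: distrib_left distrib_right)
qed

end

locale cstar_trace = cstar +
  fixes tr :: "'a::{real_normed_algebra_1,banach} \<Rightarrow> complex"
  assumes faithful_trace: "faithful_trace cs adj tr"
begin

lemma trace_add: "tr (x + y) = tr x + tr y"
  using faithful_trace unfolding faithful_trace_def by metis

lemma trace_cs: "tr (cs a x) = a * tr x"
  using faithful_trace unfolding faithful_trace_def by metis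

lemma trace_positive: "positive_el adj A \<Longrightarrow> Im (tr A) = 0 \<and> Re (tr A) \<ge> 0"
  using faithful_trace unfolding faithful_trace_def by metis

lemma trace_commute: "tr (x * y) = tr (y * x)"
  using faithful_trace unfolding faithful_trace_def by metis

lemma trace_faithful: "positive_el adj A \<Longrightarrow> tr A = 0 \<Longrightarrow> A = 0"
  using faithful_trace unfolding faithful_trace_def by metis

lemma trace_scaleR: "tr (r *\<^sub>R x) = r *\<^sub>R tr x"
  using trace_cs[of "complex_of_real r" x] by (simp add: cs_of_real scaleR_conv_of_real)

lemma trace_diff: "tr (x - y) = tr x - tr y"
  using trace_add[of "x - y" y] by simp

lemma trace_0 [simp]: "tr 0 = 0"
  using trace_diff[of 0 0] by simp

lemma cmod_trace_le_of_norm_lt_1: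
  assumes "adj w = w" and "norm w < 1"
  shows "cmod (tr w) \<le> Re (tr 1)"
proof -
  have "positive_el adj (1 - w)"
    using positive_one_minus assms by blast
  then have "Im (tr 1 - tr w) = 0 \<and> Re (tr 1 - tr w) \<ge> 0"
    using trace_positive[of "1 - w"] by (simp add: trace_diff)
  moreover have "positive_el adj (1 + w)"
    using positive_one_minus[of "- w"] assms by (simp add: adj.neg)
  then have "Im (tr 1 + tr w) = 0 \<and> Re (tr 1 + tr w) \<ge> 0"
    using trace_positive[of "1 + w"] by (simp add: trace_add)
  ultimately have "Im (tr w) = 0" and "\<bar>Re (tr w)\<bar> \<le> Re (tr 1)"
    by auto
  then show ?thesis
    by (simp add: cmod_def)
qed

lemma cmod_trace_le_sa:
  assumes "adj z = z"
  shows "cmod (tr z) \<le> 2 * Re (tr 1) * norm z"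
proof (cases "z = 0")
  case False
  define w where "w = (1 / (2 * norm z)) *\<^sub>R z"
  have "cmod (tr z) = 2 * norm z * cmod (tr w)"
    using False by (simp add: w_def trace_scaleR)
  also have "\<dots> \<le> 2 * norm z * Re (tr 1)"
    using False assms by (intro mult_left_mono cmod_trace_le_of_norm_lt_1) (auto simp: w_def adj_scaleR)
  finally show ?thesis
    by (simp add: mult_ac)
qed simp

lemma bounded_linear_trace: "bounded_linear tr"
proof (rule bounded_linear_intro[where K="4 * Re (tr 1)"])
  fix x
  obtain h k where hk: "adj h = h" "adj k = k" "x = h + cs \<i> k" "norm h \<le> norm x" "norm k \<le> norm x"
    using sa_decomposition by metis
  have "Re (tr 1) \<ge> 0"
    using trace_positive[of 1] unfolding positive_el_def by (metis adj_one mult_1)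
  then have "2 * Re (tr 1) * norm h \<le> 2 * Re (tr 1) * norm x" "2 * Re (tr 1) * norm k \<le> 2 * Re (tr 1) * norm x"
    using hk(4,5) by (simp_all add: mult_left_mono)
  then have "cmod (tr h) + cmod (tr k) \<le> 2 * Re (tr 1) * norm x + 2 * Re (tr 1) * norm x"
    using cmod_trace_le_sa[OF hk(1)] cmod_trace_le_sa[OF hk(2)] by linarith
  moreover have "cmod (tr x) \<le> cmod (tr h) + cmod (tr k)"
    using norm_triangle_ineq[of "tr h" "\<i> * tr k"] hk(3) by (simp add: trace_add trace_cs norm_mult)
  ultimately show "norm (tr x) \<le> norm x * (4 * Re (tr 1))"
    by simp
qed (auto simp: trace_add trace_scaleR)

sublocale trace: bounded_linear tr
  by (rule bounded_linear_trace)

lemma eq_0_if_trace_adj_mult_self_eq_0: "tr (adj x * x) = 0 \<Longrightarrow> x = 0"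
  using trace_faithful eq_0_if_adj_mult_self_eq_0 unfolding positive_el_def by blast

lemma sa_eq_if_trace_mult_eq:
  assumes "adj Z1 = Z1" "adj Z2 = Z2" and "\<And>Y. adj Y = Y \<Longrightarrow> tr (Z1 * Y) = tr (Z2 * Y)"
  shows "Z1 = Z2"
proof -
  have "adj (Z1 - Z2) = Z1 - Z2"
    by (simp add: adj.diff assms(1,2))
  then have "tr (adj (Z1 - Z2) * (Z1 - Z2)) = 0"
    using assms(3) by (simp add: left_diff_distrib trace_diff)
  then have "Z1 - Z2 = 0"
    by (rule eq_0_if_trace_adj_mult_self_eq_0)
  then show ?thesis
    by simp
qed

text \<open>The hypothesis for \<open>K\<close>, \<open>2 K\<close> and \<open>X + 2 K\<close>, using \<open>exp (X + 2 K + X) = exp (K + X)\<^sup>2\<close>.\<close>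

lemma exp_quartic_identity:
  assumes "adj X = X" "adj K = K"
    and symmetrized: "\<And>H. adj H = H \<Longrightarrow> 2 *\<^sub>R exp (H + X) = exp X * exp H + exp H * exp X"
  shows "exp X * (exp X * exp K * exp K + exp K * exp K * exp X) + (exp X * exp K * exp K + exp K * exp K * exp X) * exp X
    = (exp X * exp K + exp K * exp X) * (exp X * exp K + exp K * exp X)"
proof -
  have exp_double: "exp (Z + Z) = exp Z * exp Z" for Z :: 'a
    by (rule exp_add_commuting) (rule refl)
  define E e1 e2 where "E = exp X" and "e1 = exp (K + X)" and "e2 = exp (2 *\<^sub>R K + X)"
  have Q: "exp X * exp K * exp K + exp K * exp K * exp X = 2 *\<^sub>R e2"
    using symmetrized[of "2 *\<^sub>R K"] assms(2) by (simp add: e2_def adj_add scaleR_2 exp_double mult.assoc)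
  have sum_eq: "(X + 2 *\<^sub>R K) + X = (K + X) + (K + X)"
    by (simp add: scaleR_2 algebra_simps)
  have "adj (X + 2 *\<^sub>R K) = X + 2 *\<^sub>R K"
    using assms(1,2) by (simp add: adj_add adj_scaleR)
  from symmetrized[OF this] have "2 *\<^sub>R exp ((K + X) + (K + X)) = E * exp (X + 2 *\<^sub>R K) + exp (X + 2 *\<^sub>R K) * E"
    by (simp only: E_def sum_eq)
  then have R: "2 *\<^sub>R (e1 * e1) = E * e2 + e2 * E"
    unfolding e1_def e2_def exp_double add.commute[of X "2 *\<^sub>R K"] .
  have "E * (2 *\<^sub>R e2) + (2 *\<^sub>R e2) * E = 2 *\<^sub>R (E * e2 + e2 * E)"
    by (simp add: scaleR_add_right)
  also have "\<dots> = (2 *\<^sub>R e1) * (2 *\<^sub>R e1)"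
    by (simp add: R[symmetric])
  also have "2 *\<^sub>R e1 = exp X * exp K + exp K * exp X"
    using symmetrized assms(2) unfolding e1_def .
  finally show ?thesis
    unfolding Q E_def .
qed

lemma commute_exp_if_symmetrized:
  assumes "adj X = X" "adj K = K"
    and "\<And>H. adj H = H \<Longrightarrow> 2 *\<^sub>R exp (H + X) = exp X * exp H + exp H * exp X"
  shows "exp X * K = K * exp X"
proof (rule commute_if_commute_exp)
  fix t :: real
  define E G where "E = exp X" and "G = exp (t *\<^sub>R K)"
  have "adj E = E" "adj G = G"
    using assms(1,2) by (simp_all add: E_def G_def adj_exp adj_scaleR)
  then have "adj (E * G - G * E) * (E * G - G * E) = (G * E - E * G) * (E * G - G * E)"
    by (simp add: adj.diff adj_mult)
  moreover have "tr ((G * E - E * G) * (E * G - G * E)) = 0"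
    using exp_quartic_identity[of X "t *\<^sub>R K"] assms unfolding E_def G_def
    by (intro trace_commutator_mult_eq_0 trace.linear trace_commute) (simp_all add: adj_scaleR)
  ultimately have "E * G - G * E = 0"
    using eq_0_if_trace_adj_mult_self_eq_0 by metis
  then show "exp X * exp (t *\<^sub>R K) = exp (t *\<^sub>R K) * exp X"
    by (simp add: E_def G_def)
qed

lemma central_if_exp_add_symmetrized:
  assumes "adj X = X"
    and symmetrized: "\<And>H. adj H = H \<Longrightarrow> 2 *\<^sub>R exp (H + X) = exp X * exp H + exp H * exp X"
  shows "X * Y = Y * X"
proof (rule commute_if_commute_sa)
  have exp_commute: "exp X * K = K * exp X" if "adj K = K" for K
    by (rule commute_exp_if_symmetrized[OF assms(1) that symmetrized])
  have X_exp_commute: "X * exp H = exp H * X" if "adj H = H" for H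
  proof (rule commute_exp_if_exp_add_eq)
    show "exp X * H = H * exp X"
      using exp_commute that .
    have "adj (exp H) = exp H"
      using that by (simp add: adj_exp)
    then have "2 *\<^sub>R exp (H + X) = 2 *\<^sub>R (exp X * exp H)"
      using symmetrized[OF that] exp_commute by (simp add: scaleR_2)
    then show "exp (H + X) = exp X * exp H"
      by simp
  qed
  fix H
  assume "adj H = H"
  show "X * H = H * X"
  proof (rule commute_if_commute_exp)
    fix t :: real
    have "adj (t *\<^sub>R H) = t *\<^sub>R H"
      using \<open>adj H = H\<close> by (simp add: adj_scaleR)
    then show "X * exp (t *\<^sub>R H) = exp (t *\<^sub>R H) * X"
      by (rule X_exp_commute)
  qed
qed

end

section \<open>Jordan *-isomorphisms and the trace identity\<close>

locale jordan_star_isomorphism = A: cstar csA adjA + B: cstar csB adjB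
  for csA :: "complex \<Rightarrow> 'a::{real_normed_algebra_1,banach} \<Rightarrow> 'a" and adjA
    and csB :: "complex \<Rightarrow> 'b::{real_normed_algebra_1,banach} \<Rightarrow> 'b" and adjB +
  fixes J :: "'a \<Rightarrow> 'b"
  assumes jordan_star_iso: "jordan_star_iso csA adjA csB adjB J"
begin

lemma bij_J: "bij J"
  using jordan_star_iso unfolding jordan_star_iso_def by blast

lemma J_add: "J (x + y) = J x + J y"
  using jordan_star_iso unfolding jordan_star_iso_def by metis

lemma J_cs: "J (csA a x) = csB a (J x)"
  using jordan_star_iso unfolding jordan_star_iso_def by metis

lemma J_jordan: "J (x * y + y * x) = J x * J y + J y * J x"
  using jordan_star_iso unfolding jordan_star_iso_def by metis

lemma J_adj: "J (adjA x) = adjB (J x)"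
  using jordan_star_iso unfolding jordan_star_iso_def by metis

lemma J_scaleR: "J (r *\<^sub>R x) = r *\<^sub>R J x"
  using J_cs[of "complex_of_real r" x] by (simp add: A.cs_of_real B.cs_of_real)

sublocale J: linear J
  by (rule linearI) (simp_all add: J_add J_scaleR)

lemma J_one: "J 1 = 1"
proof -
  obtain x where "J x = 1"
    using bij_J by (metis bij_pointE)
  then have "2 *\<^sub>R J 1 = 2 *\<^sub>R 1"
    using J_jordan[of x 1] by (simp add: scaleR_2 J_add)
  then show ?thesis
    by simp
qed

lemma J_power: "J (x ^ n) = J x ^ n"
proof (induction n)
  case (Suc n)
  then have "2 *\<^sub>R J (x ^ Suc n) = 2 *\<^sub>R J x ^ Suc n"
    using J_jordan[of x "x ^ n"] by (simp add: scaleR_2 J_add power_commutes)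
  then show ?case
    by simp
qed (simp add: J_one)

lemma J_sa_preimageE:
  assumes "adjB Y = Y"
  obtains S where "adjA S = S" "J S = Y"
proof -
  obtain S where S: "J S = Y"
    using bij_J by (metis bij_pointE)
  moreover have "adjA S = S"
    using S assms bij_J by (metis J_adj bij_is_inj inj_eq)
  ultimately show ?thesis
    using that by blast
qed

end

locale traced_jordan_iso =
  jordan_star_isomorphism csA adjA csB adjB J + A: cstar_trace csA adjA tau + B: cstar_trace csB adjB omega
  for csA adjA csB adjB J tau omega
begin

context
  fixes X0
  assumes exp_trace_eq: "\<And>T. adjA T = T \<Longrightarrow> omega (exp (J T + X0)) = tau (exp T)"
begin

lemma trace_exp_mult_eq:
  assumes "adjA T = T" "adjA S = S"
  shows "omega (exp (J T + X0) * J S) = tau (exp T * S)"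
proof -
  have "adjA (T + t *\<^sub>R S) = T + t *\<^sub>R S" for t
    using assms by (simp add: A.adj_add A.adj_scaleR)
  then have "omega (exp ((J T + X0) + t *\<^sub>R J S)) = tau (exp (T + t *\<^sub>R S))" for t
    using exp_trace_eq[of "T + t *\<^sub>R S"] by (simp add: J.add J.scale algebra_simps)
  then have "(\<lambda>t. omega (exp ((J T + X0) + t *\<^sub>R J S))) = (\<lambda>t. tau (exp (T + t *\<^sub>R S)))"
    by (rule ext)
  then show ?thesis
    using trace_exp_has_vector_derivative[OF B.bounded_linear_trace B.trace_commute, of "J T + X0" "J S"]
      trace_exp_has_vector_derivative[OF A.bounded_linear_trace A.trace_commute, of T S]
    by (metis vector_derivative_unique_at)
qed

lemma trace_eq_trace_exp_mult: "adjA S = S \<Longrightarrow> tau S = omega (exp X0 * J S)"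
  using trace_exp_mult_eq[of 0 S] by simp

lemma trace_power_mult_eq:
  assumes "adjA T = T" "adjA S = S"
  shows "2 * tau (T ^ n * S) = omega ((exp X0 * J T ^ n + J T ^ n * exp X0) * J S)"
proof -
  have "adjA (T ^ n * S + S * T ^ n) = T ^ n * S + S * T ^ n"
    using assms by (simp add: A.adj_add A.adj_mult A.adj_power add.commute)
  then have "tau (T ^ n * S + S * T ^ n) = omega (exp X0 * (J T ^ n * J S + J S * J T ^ n))"
    using trace_eq_trace_exp_mult J_jordan[of "T ^ n" S] by (simp add: J_power)
  moreover have "omega (exp X0 * (J S * J T ^ n)) = omega (J T ^ n * exp X0 * J S)"
    using B.trace_commute[of "exp X0 * J S" "J T ^ n"] by (simp add: mult.assoc)
  ultimately show ?thesis
    using A.trace_commute[of S "T ^ n"]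
    by (simp add: A.trace_add B.trace_add distrib_left distrib_right mult.assoc)
qed

lemma exp_add_symmetrized:
  assumes "adjB X0 = X0" "adjB H = H"
  shows "2 *\<^sub>R exp (H + X0) = exp X0 * exp H + exp H * exp X0"
proof (rule B.sa_eq_if_trace_mult_eq)
  show "adjB (2 *\<^sub>R exp (H + X0)) = 2 *\<^sub>R exp (H + X0)"
    using assms by (simp add: B.adj_scaleR B.adj_exp B.adj_add)
  show "adjB (exp X0 * exp H + exp H * exp X0) = exp X0 * exp H + exp H * exp X0"
    using assms by (simp add: B.adj_exp B.adj_add B.adj_mult add.commute)
  fix Y
  assume "adjB Y = Y"
  obtain T S where TS: "adjA T = T" "J T = H" "adjA S = S" "J S = Y"
    using J_sa_preimageE assms(2) \<open>adjB Y = Y\<close> by metis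
  have "2 * tau (exp T * S) = omega ((exp X0 * exp H + exp H * exp X0) * Y)"
  proof (rule exp_eq_if_powers_eq[where f = "\<lambda>X. 2 * tau (X * S)" and g = "\<lambda>X. omega ((exp X0 * X + X * exp X0) * Y)"])
    show "bounded_linear (\<lambda>X. 2 * tau (X * S))"
      by (intro bounded_linear_compose[OF bounded_linear_mult_right] bounded_linear_compose[OF A.bounded_linear_trace]
          bounded_linear_mult_left)
    show "bounded_linear (\<lambda>X. omega ((exp X0 * X + X * exp X0) * Y))"
      by (intro bounded_linear_compose[OF B.bounded_linear_trace] bounded_linear_compose[OF bounded_linear_mult_left]
          bounded_linear_add bounded_linear_mult_left bounded_linear_mult_right)
    show "2 * tau (T ^ n * S) = omega ((exp X0 * H ^ n + H ^ n * exp X0) * Y)" for n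
      using trace_power_mult_eq[OF TS(1,3)] TS by simp
  qed
  then show "omega (2 *\<^sub>R exp (H + X0) * Y) = omega ((exp X0 * exp H + exp H * exp X0) * Y)"
    unfolding mult_scaleR_left B.trace_scaleR
    using trace_exp_mult_eq[OF TS(1,3)] TS by (simp add: scaleR_conv_of_real)
qed

end

end

theorem lemma20:
  fixes csA :: "complex \<Rightarrow> 'a::{real_normed_algebra_1,banach} \<Rightarrow> 'a"
    and adjA :: "'a \<Rightarrow> 'a"
    and csB :: "complex \<Rightarrow> 'b::{real_normed_algebra_1,banach} \<Rightarrow> 'b"
    and adjB :: "'b \<Rightarrow> 'b"
    and tau :: "'a \<Rightarrow> complex" and omega :: "'b \<Rightarrow> complex"
    and J :: "'a \<Rightarrow> 'b" and X0 :: 'b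
  assumes "cstar_algebra csA adjA"
    and "cstar_algebra csB adjB"
    and "faithful_trace csA adjA tau"
    and "faithful_trace csB adjB omega"
    and "jordan_star_iso csA adjA csB adjB J"
    and "adjB X0 = X0"
    and "\<forall>T. adjA T = T \<longrightarrow> omega (exp (J T + X0)) = tau (exp T)"
  shows "\<forall>Y. X0 * Y = Y * X0"
proof -
  interpret traced_jordan_iso csA adjA csB adjB J tau omega
    by unfold_locales (rule assms)+
  have "2 *\<^sub>R exp (H + X0) = exp X0 * exp H + exp H * exp X0" if "adjB H = H" for H
    using exp_add_symmetrized[of X0 H] assms(6,7) that by blast
  then show ?thesis
    using B.central_if_exp_add_symmetrized[OF assms(6)] by blast
qed

end
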